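(* Assume the following setup. Let $a,x,u,v$ be integers with $3\le a\le x$, $0\le u\le a-3$, and $u+2\le v\le\min\left(a-1,\frac{a(x-1)}{x}\right)$. Let $\lambda$ consist of $ua+v$ parts equal to $x$ and $v-(u+1)$ parts equal to $ax$, and let $n=|\lambda|$, so that $n=x[(a+1)(v-1)+1]$ and $n-1=xa(v-1)+xv-1$. For $0\le i\le n-2$ write uniquely \[ i=\frac{n}{x}r_i+(v-1)p_i+q_i \] with integers $0\le r_i<x$, $0\le p_i<a+2$, $0\le q_i<v-1$, $0\le (v-1)p_i+q_i<n/x$ (so $p_i=a+1$ implies $q_i=0$). Define $s_{1,i}=ix-(n-1)\left\lfloor\frac{ix}{n-1}\right\rfloor$. Then for every $0\le i\le n-2$, \[ s_{1,i}=r_i+x\big[(v-1)p_i+q_i\big]. \] *)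

theory Defs
  imports Complex_Main
begin

definition lam_size :: "int \<Rightarrow> int \<Rightarrow> int \<Rightarrow> int \<Rightarrow> int" where
  "lam_size a x u v = (u*a + v) * x + (v - (u+1)) * (a*x)"

definition s1 :: "int \<Rightarrow> int \<Rightarrow> int \<Rightarrow> int" where
  "s1 n x i = i*x - (n-1) * \<lfloor>real_of_int (i*x) / real_of_int (n-1)\<rfloor>"

end

theory Submission
  imports Defs
begin

text \<open>Since n = x m with m = (a+1)(v-1)+1 = n/x, the hypothesis says i = m r + t with
  0 \<le> t < m. Then i x = (n-1) r + (r + x t), and 0 \<le> r + x t < n - 1, the upper bound
  failing only for r = x - 1, t = m - 1, i.e. i = n - 1. Hence the floor is r and
  s_{1,i} = r + x t.\<close>

lemma s1_eq_mod: "s1 n x i = (i * x) mod (n - 1)"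
  unfolding s1_def floor_divide_of_int_eq by (simp add: minus_mult_div_eq_mod)

lemma lam_size_eq: "lam_size a x u v = x * ((a + 1) * (v - 1) + 1)"
  unfolding lam_size_def by (simp add: algebra_simps)

lemma mixed_radix_mult_mod:
  fixes x m r t :: int
  assumes r: "0 \<le> r" "r < x" and t: "0 \<le> t" "t < m"
    and below: "m * r + t \<le> x * m - 2"
  shows "((m * r + t) * x) mod (x * m - 1) = r + x * t"
proof -
  have xt: "x * t \<le> x * (m - 1)"
    using r t by (intro mult_left_mono) auto
  have "r + x * t < x * m - 1"
  proof (rule ccontr)
    assume "\<not> ?thesis"
    with r xt have "r = x - 1" "x * t = x * (m - 1)"
      by (auto simp: algebra_simps)
    then have "t = m - 1"
      using r by simp
    with \<open>r = x - 1\<close> have "m * r + t = x * m - 1"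
      by (simp only:) (simp add: algebra_simps)
    with below show False
      by simp
  qed
  moreover have "0 \<le> r + x * t"
    using r t by simp
  moreover have "(m * r + t) * x = r * (x * m - 1) + (r + x * t)"
    by (simp add: algebra_simps)
  ultimately show ?thesis
    by simp
qed

theorem lemma4p5:
  fixes a x u v n i r p q :: int
  assumes "3 \<le> a" and "a \<le> x"
    and "0 \<le> u" and "u \<le> a - 3"
    and "u + 2 \<le> v" and "v \<le> a - 1"
    and "real_of_int v \<le> real_of_int (a*(x-1)) / real_of_int x"
    and "n = lam_size a x u v"
    and "0 \<le> i" and "i \<le> n - 2"
    and "real_of_int i = real_of_int n / real_of_int x * real_of_int r
                         + real_of_int ((v-1)*p + q)"
    and "0 \<le> r" and "r < x"
    and "0 \<le> p" and "p < a + 2"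
    and "0 \<le> q" and "q < v - 1"
    and "0 \<le> (v-1)*p + q"
    and "real_of_int ((v-1)*p + q) < real_of_int n / real_of_int x"
  shows "s1 n x i = r + x * ((v-1)*p + q)"
proof -
  define m where "m = (a + 1) * (v - 1) + 1"
  define t where "t = (v - 1) * p + q"
  have n: "n = x * m"
    using assms(8) by (simp add: lam_size_eq m_def)
  have n_div_x: "real_of_int n / real_of_int x = real_of_int m"
    using n assms(1,2) by simp
  have i: "i = m * r + t"
    using assms(11) unfolding n_div_x t_def by (simp flip: of_int_mult of_int_add)
  have t: "0 \<le> t" "t < m"
    using assms(18,19) unfolding n_div_x t_def by (simp_all only: of_int_less_iff)
  have "m * r + t \<le> x * m - 2"
    using assms(10) unfolding i n .
  with assms(12,13) t have "(i * x) mod (n - 1) = r + x * t"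
    unfolding i n by (rule mixed_radix_mult_mod)
  then show ?thesis
    by (simp add: s1_eq_mod t_def)
qed

end
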